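(* Let $f$ be a deterministic voting rule whose utilitarian distortion on instances with $m$ alternatives is $o(m^2\sqrt m)$ as $m\to\infty$. Then for all sufficiently large $m$, the metric distortion of $f$ on instances with $m$ alternatives is strictly greater than $3$.
   Context: Setting: $n$ agents, $m$ alternatives, each agent has a strict ranking; a deterministic voting rule maps each profile to one alternative. Metric framework: pseudometric $d$ on agents and alternatives, consistent with profile $\vec\sigma$ if $X\succ_iY\Rightarrow d(i,X)\le d(i,Y)$; $\mathrm{SC}(X,d)=\sum_id(i,X)$; the metric distortion of $f$ (for given $m$) is $\sup$ over profiles with $m$ alternatives and consistent $d$ of $\mathrm{SC}(f(\vec\sigma),d)/\min_X\mathrm{SC}(X,d)$. Utilitarian framework: unit-sum nonnegative utilities $u_i$ ($\sum_Xu_i(X)=1$), consistent if $X\succ_iY\Rightarrow u_i(X)\ge u_i(Y)$; $\mathrm{SW}(X,\vec u)=\sum_iu_i(X)$; the utilitarian distortion of $f$ (for given $m$) is $\sup$ over profiles with $m$ alternatives and consistent $\vec u$ of $\max_X\mathrm{SW}(X,\vec u)/\mathrm{SW}(f(\vec\sigma),\vec u)$. *)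

theory Defs
  imports Complex_Main "HOL-Library.Extended_Real"
begin

text \<open>Alternatives are 0..<m, agents are 0..<n. A profile is a list of n rankings;
  a ranking is a list enumerating all alternatives, most preferred first.\<close>

definition is_ranking :: "nat \<Rightarrow> nat list \<Rightarrow> bool" where
  "is_ranking m r \<longleftrightarrow> distinct r \<and> set r = {..<m}"

definition valid_profile :: "nat \<Rightarrow> nat list list \<Rightarrow> bool" where
  "valid_profile m P \<longleftrightarrow> m \<ge> 1 \<and> P \<noteq> [] \<and> (\<forall>r\<in>set P. is_ranking m r)"

definition prefers :: "nat list \<Rightarrow> nat \<Rightarrow> nat \<Rightarrow> bool" where
  "prefers r X Y \<longleftrightarrow> (\<exists>k l. k < l \<and> l < length r \<and> r ! k = X \<and> r ! l = Y)"

definition voting_rule :: "(nat \<Rightarrow> nat list list \<Rightarrow> nat) \<Rightarrow> bool" where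
  "voting_rule f \<longleftrightarrow> (\<forall>m P. valid_profile m P \<longrightarrow> f m P < m)"

text \<open>Points of the metric space: agents Inl i, alternatives Inr X.\<close>
definition points :: "nat \<Rightarrow> nat \<Rightarrow> (nat + nat) set" where
  "points n m = Inl ` {..<n} \<union> Inr ` {..<m}"

definition pseudometric_on :: "'a set \<Rightarrow> ('a \<Rightarrow> 'a \<Rightarrow> real) \<Rightarrow> bool" where
  "pseudometric_on S d \<longleftrightarrow>
     (\<forall>x\<in>S. d x x = 0) \<and>
     (\<forall>x\<in>S. \<forall>y\<in>S. 0 \<le> d x y \<and> d x y = d y x) \<and>
     (\<forall>x\<in>S. \<forall>y\<in>S. \<forall>z\<in>S. d x z \<le> d x y + d y z)"

definition metric_consistent :: "nat \<Rightarrow> nat list list \<Rightarrow> ((nat + nat) \<Rightarrow> (nat + nat) \<Rightarrow> real) \<Rightarrow> bool" where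
  "metric_consistent m P d \<longleftrightarrow>
     pseudometric_on (points (length P) m) d \<and>
     (\<forall>i<length P. \<forall>X<m. \<forall>Y<m. prefers (P ! i) X Y \<longrightarrow> d (Inl i) (Inr X) \<le> d (Inl i) (Inr Y))"

definition SC :: "nat \<Rightarrow> nat list list \<Rightarrow> ((nat + nat) \<Rightarrow> (nat + nat) \<Rightarrow> real) \<Rightarrow> real" where
  "SC X P d = (\<Sum>i<length P. d (Inl i) (Inr X))"

definition utility_consistent :: "nat \<Rightarrow> nat list list \<Rightarrow> (nat \<Rightarrow> nat \<Rightarrow> real) \<Rightarrow> bool" where
  "utility_consistent m P u \<longleftrightarrow>
     (\<forall>i<length P. (\<forall>X<m. 0 \<le> u i X) \<and> (\<Sum>X<m. u i X) = 1) \<and>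
     (\<forall>i<length P. \<forall>X<m. \<forall>Y<m. prefers (P ! i) X Y \<longrightarrow> u i X \<ge> u i Y)"

definition SW :: "nat \<Rightarrow> nat list list \<Rightarrow> (nat \<Rightarrow> nat \<Rightarrow> real) \<Rightarrow> real" where
  "SW X P u = (\<Sum>i<length P. u i X)"

definition ratio :: "real \<Rightarrow> real \<Rightarrow> ereal" where
  "ratio a b = (if b = 0 then (if a = 0 then 1 else \<infinity>) else ereal (a / b))"

definition metric_distortion :: "(nat \<Rightarrow> nat list list \<Rightarrow> nat) \<Rightarrow> nat \<Rightarrow> ereal" where
  "metric_distortion f m = Sup {ratio (SC (f m P) P d) (Min ((\<lambda>X. SC X P d) ` {..<m})) | P d.
      valid_profile m P \<and> metric_consistent m P d}"

definition utilitarian_distortion :: "(nat \<Rightarrow> nat list list \<Rightarrow> nat) \<Rightarrow> nat \<Rightarrow> ereal" where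
  "utilitarian_distortion f m = Sup {ratio (Max ((\<lambda>X. SW X P u) ` {..<m})) (SW (f m P) P u) | P u.
      valid_profile m P \<and> utility_consistent m P u}"

end

theory Submission
  imports Defs "HOL-Real_Asymp.Real_Asymp"
begin

text \<open>A single profile with alternatives 0, \<dots>, m-1 and 2^(m-1)+1 agents defeats f.
  Two agents (type 0) rank the alternatives increasingly; for t \<ge> 1 there are 2^(t-1) agents
  (type t) who rank t first and the rest increasingly. If f elects 0, the unit-sum utilities that
  put all of a type-t agent's weight on t (t \<ge> 1) and spread the type-0 agents' weight uniformly
  give welfare 2/m to 0 but 2^(m-2) to m-1, a utilitarian distortion of order m 2^m. If f elects
  j \<ge> 1, there is a metric in which j costs more than three times as much as 0, because the agents
  of type below j outnumber those of type j.\<close>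

lemma prefers_imp_key_less:
  assumes "sorted_wrt (\<lambda>a b. key a < key b) r" "prefers r X Y"
  shows "key X < (key Y :: 'b :: order)"
  using assms sorted_wrt_nth_less unfolding prefers_def by blast

lemma SC_nonneg:
  assumes "metric_consistent m P d" "X < m"
  shows "0 \<le> SC X P d"
  using assms unfolding metric_consistent_def pseudometric_on_def SC_def points_def
  by (auto intro!: sum_nonneg)

lemma metric_distortion_gt:
  assumes "valid_profile m P" "metric_consistent m P d" "Y < m" "0 \<le> c"
    and "c * SC Y P d < SC (f m P) P d"
  shows "ereal c < metric_distortion f m"
proof -
  let ?opt = "Min ((\<lambda>X. SC X P d) ` {..<m})"
  have "?opt \<le> SC Y P d"
    using assms(3) by (intro Min_le) auto
  moreover have "0 \<le> ?opt"
    using assms(2,3) SC_nonneg by (subst Min_ge_iff) auto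
  moreover have "0 \<le> c * SC Y P d"
    using assms(2-4) by (meson SC_nonneg mult_nonneg_nonneg)
  then have "0 < SC (f m P) P d"
    using assms(5) by linarith
  ultimately have "ereal c < ratio (SC (f m P) P d) ?opt"
    using assms(4,5) mult_left_mono[of ?opt "SC Y P d" c]
    by (cases "?opt = 0") (auto simp: ratio_def pos_less_divide_eq)
  moreover have "ratio (SC (f m P) P d) ?opt \<le> metric_distortion f m"
    unfolding metric_distortion_def using assms(1,2) by (intro Sup_upper) blast
  ultimately show ?thesis by order
qed

lemma utilitarian_distortion_ge:
  assumes "valid_profile m P" "utility_consistent m P u" "X < m"
    and "0 < SW (f m P) P u"
  shows "ereal (SW X P u / SW (f m P) P u) \<le> utilitarian_distortion f m"
proof -
  let ?opt = "Max ((\<lambda>X. SW X P u) ` {..<m})"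
  have "SW X P u \<le> ?opt"
    using assms(3) by (intro Max_ge) auto
  then have "ereal (SW X P u / SW (f m P) P u) \<le> ratio ?opt (SW (f m P) P u)"
    using assms(4) by (simp add: ratio_def divide_right_mono)
  also have "\<dots> \<le> utilitarian_distortion f m"
    unfolding utilitarian_distortion_def using assms(1,2) by (intro Sup_upper) blast
  finally show ?thesis .
qed

section \<open>The hard profile\<close>

definition agent_type :: "nat \<Rightarrow> nat" where
  "agent_type i = (LEAST t. i \<le> 2 ^ t)"

definition hard_ranking :: "nat \<Rightarrow> nat \<Rightarrow> nat list" where
  "hard_ranking m t = t # filter (\<lambda>X. X \<noteq> t) [0..<m]"

definition hard_size :: "nat \<Rightarrow> nat" where
  "hard_size m = 2 ^ (m - 1) + 1"

definition hard_profile :: "nat \<Rightarrow> nat list list" where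
  "hard_profile m = map (\<lambda>i. hard_ranking m (agent_type i)) [0..<hard_size m]"

definition hard_key :: "nat \<Rightarrow> nat \<Rightarrow> nat" where
  "hard_key t X = (if X = t then 0 else Suc X)"

lemma agent_type_le_iff: "agent_type i \<le> k \<longleftrightarrow> i \<le> 2 ^ k"
proof
  have "i \<le> 2 ^ agent_type i"
    unfolding agent_type_def by (rule LeastI[of _ i]) simp
  then show "agent_type i \<le> k \<Longrightarrow> i \<le> 2 ^ k"
    by (meson order.trans one_le_numeral power_increasing)
qed (simp add: agent_type_def Least_le)

lemma agent_type_less_iff: "1 \<le> j \<Longrightarrow> agent_type i < j \<longleftrightarrow> i \<le> 2 ^ (j - 1)"
  using agent_type_le_iff[of i "j - 1"] by linarith

lemma agent_type_eq_iff: "1 \<le> j \<Longrightarrow> agent_type i = j \<longleftrightarrow> 2 ^ (j - 1) < i \<and> i \<le> 2 ^ j"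
  using agent_type_less_iff[of j i] agent_type_le_iff[of i j] by auto

lemma card_agent_type_less:
  assumes "1 \<le> j" "2 ^ (j - 1) < N"
  shows "card {i \<in> {..<N}. agent_type i < j} = 2 ^ (j - 1) + 1"
proof -
  have "{i \<in> {..<N}. agent_type i < j} = {..2 ^ (j - 1)}"
    using assms by (auto simp: agent_type_less_iff)
  then show ?thesis by simp
qed

lemma card_agent_type_eq:
  assumes "1 \<le> j" "2 ^ j < N"
  shows "card {i \<in> {..<N}. agent_type i = j} = 2 ^ (j - 1)"
proof -
  have "{i \<in> {..<N}. agent_type i = j} = {2 ^ (j - 1)<..2 ^ j}"
    using assms by (auto simp: agent_type_eq_iff)
  moreover have "(2::nat) ^ j = 2 * 2 ^ (j - 1)"
    using assms(1) by (simp flip: power_Suc)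
  ultimately show ?thesis by simp
qed

lemma hard_ranking_sorted: "sorted_wrt (\<lambda>a b. hard_key t a < hard_key t b) (hard_ranking m t)"
proof -
  have "sorted_wrt (<) (filter (\<lambda>X. X \<noteq> t) [0..<m])"
    by (intro sorted_wrt_filter) (simp add: sorted_wrt_upt)
  then have "sorted_wrt (\<lambda>a b. hard_key t a < hard_key t b) (filter (\<lambda>X. X \<noteq> t) [0..<m])"
    by (rule sorted_wrt_mono_rel[rotated]) (auto simp: hard_key_def)
  then show ?thesis by (simp add: hard_ranking_def hard_key_def)
qed

lemma length_hard_profile [simp]: "length (hard_profile m) = hard_size m"
  by (simp add: hard_profile_def)

lemma nth_hard_profile [simp]:
  "i < hard_size m \<Longrightarrow> hard_profile m ! i = hard_ranking m (agent_type i)"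
  by (simp add: hard_profile_def)

lemma power2_less_hard_size:
  assumes "j < m"
  shows "2 ^ j < hard_size m"
proof -
  have "(2::nat) ^ j \<le> 2 ^ (m - 1)"
    using assms by (intro power_increasing) auto
  then show ?thesis
    unfolding hard_size_def by linarith
qed

lemma agent_type_less_alternatives: "1 \<le> m \<Longrightarrow> i < hard_size m \<Longrightarrow> agent_type i < m"
  by (simp add: agent_type_less_iff hard_size_def)

lemma is_ranking_hard_ranking: "t < m \<Longrightarrow> is_ranking m (hard_ranking m t)"
  by (auto simp: is_ranking_def hard_ranking_def)

lemma hard_profile_prefers_imp_key_less:
  "i < length (hard_profile m) \<Longrightarrow> prefers (hard_profile m ! i) X Y
    \<Longrightarrow> hard_key (agent_type i) X < hard_key (agent_type i) Y"
  using prefers_imp_key_less[OF hard_ranking_sorted] by simp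

lemma valid_hard_profile: "1 \<le> m \<Longrightarrow> valid_profile m (hard_profile m)"
  using agent_type_less_alternatives[of m] is_ranking_hard_ranking
  by (auto simp: valid_profile_def in_set_conv_nth hard_size_def simp flip: length_0_conv)

section \<open>A metric against winners other than 0\<close>

text \<open>For a winner j \<ge> 1: the shortest-path metric of the graph in which a hub carrying the
  alternatives below j and the agents of type below j is joined by unit edges to every other
  agent, agents of type j to all alternatives from j on, and agents of type t > j to t.\<close>

definition hard_alt_dist :: "nat \<Rightarrow> nat \<Rightarrow> nat \<Rightarrow> real" where
  "hard_alt_dist j t X =
    (if t < j then (if X < j then 0 else 2)
     else if t = j then 1
     else if X < j \<or> X = t then 1 else 3)"

definition hard_metric :: "nat \<Rightarrow> nat + nat \<Rightarrow> nat + nat \<Rightarrow> real" where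
  "hard_metric j x y = (case (x, y) of
     (Inl a, Inl b) \<Rightarrow> if a = b then 0
        else if agent_type a < j \<and> agent_type b < j then 0
        else if agent_type a < j \<or> agent_type b < j then 1 else 2
   | (Inl a, Inr X) \<Rightarrow> hard_alt_dist j (agent_type a) X
   | (Inr X, Inl b) \<Rightarrow> hard_alt_dist j (agent_type b) X
   | (Inr X, Inr Y) \<Rightarrow> if X = Y then 0 else if X < j \<and> Y < j then 0 else 2)"

lemma pseudometric_hard_metric: "pseudometric_on S (hard_metric j)"
  unfolding pseudometric_on_def
proof (intro conjI ballI)
  fix x y z
  show "hard_metric j x x = 0"
    by (cases x) (auto simp: hard_metric_def)
  show "0 \<le> hard_metric j x y" "hard_metric j x y = hard_metric j y x"
    by (cases x; cases y; auto simp: hard_metric_def hard_alt_dist_def)+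
  show "hard_metric j x z \<le> hard_metric j x y + hard_metric j y z"
    by (cases x; cases y; cases z) (auto simp: hard_metric_def hard_alt_dist_def)
qed

lemma metric_consistent_hard_metric:
  assumes "1 \<le> j"
  shows "metric_consistent m (hard_profile m) (hard_metric j)"
  unfolding metric_consistent_def
proof (intro conjI allI impI pseudometric_hard_metric)
  fix i X Y
  assume "i < length (hard_profile m)" "prefers (hard_profile m ! i) X Y"
  then have "hard_key (agent_type i) X < hard_key (agent_type i) Y"
    by (rule hard_profile_prefers_imp_key_less)
  with assms show "hard_metric j (Inl i) (Inr X) \<le> hard_metric j (Inl i) (Inr Y)"
    by (auto simp: hard_metric_def hard_alt_dist_def hard_key_def split: if_splits)
qed

lemma SC_hard_metric_gt:
  assumes "1 \<le> j" "j < m"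
  shows "3 * SC 0 (hard_profile m) (hard_metric j) < SC j (hard_profile m) (hard_metric j)"
proof -
  let ?A = "{..<hard_size m}"
  have card_less: "card {i \<in> ?A. agent_type i = j} < card {i \<in> ?A. agent_type i < j}"
    using assms power2_less_hard_size[of j m] power2_less_hard_size[of "j - 1" m]
      card_agent_type_eq card_agent_type_less by simp
  have "SC j (hard_profile m) (hard_metric j) - 3 * SC 0 (hard_profile m) (hard_metric j)
      = (\<Sum>i\<in>?A. hard_alt_dist j (agent_type i) j - 3 * hard_alt_dist j (agent_type i) 0)"
    by (simp add: SC_def hard_metric_def sum_subtractf sum_distrib_left)
  also have "\<dots> = (\<Sum>i\<in>?A. 2 * of_bool (agent_type i < j) - 2 * of_bool (agent_type i = j))"
    using assms(1) by (intro sum.cong) (auto simp: hard_alt_dist_def)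
  also have "\<dots> = 2 * real (card {i \<in> ?A. agent_type i < j}) - 2 * real (card {i \<in> ?A. agent_type i = j})"
    by (simp add: sum_subtractf flip: sum_distrib_left) (simp add: sum_of_bool_eq Int_def conj_commute)
  finally show ?thesis
    using card_less by linarith
qed

lemma metric_distortion_gt_3_if_hard_winner_nonzero:
  assumes "f m (hard_profile m) \<noteq> 0" "f m (hard_profile m) < m"
  shows "3 < metric_distortion f m"
proof -
  let ?j = "f m (hard_profile m)"
  have "1 \<le> ?j" "1 \<le> m"
    using assms by auto
  then show ?thesis
    using metric_distortion_gt[of m "hard_profile m" "hard_metric ?j" 0 3 f]
      valid_hard_profile metric_consistent_hard_metric SC_hard_metric_gt assms(2)
    by simp
qed

section \<open>Utilities against the winner 0\<close>

definition hard_utility :: "nat \<Rightarrow> nat \<Rightarrow> nat \<Rightarrow> real" where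
  "hard_utility m i X = (if agent_type i = 0 then 1 / real m else of_bool (X = agent_type i))"

lemma utility_consistent_hard_utility:
  assumes "1 \<le> m"
  shows "utility_consistent m (hard_profile m) (hard_utility m)"
proof -
  have unit_sum: "(\<Sum>X<m. hard_utility m i X) = 1" if "i < hard_size m" for i
  proof (cases "agent_type i = 0")
    case True
    then show ?thesis
      using assms by (simp add: hard_utility_def)
  next
    case False
    have "agent_type i < m"
      using assms that agent_type_less_alternatives[of m i] by simp
    with False show ?thesis
      by (simp add: hard_utility_def of_bool_def sum.delta)
  qed
  have monotone: "hard_utility m i Y \<le> hard_utility m i X"
    if "i < hard_size m" "prefers (hard_profile m ! i) X Y" for i X Y
  proof -
    have "hard_key (agent_type i) X < hard_key (agent_type i) Y"
      using hard_profile_prefers_imp_key_less that by simp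
    then show ?thesis
      by (auto simp: hard_utility_def hard_key_def split: if_splits)
  qed
  show ?thesis
    unfolding utility_consistent_def using unit_sum monotone by (simp add: hard_utility_def)
qed

lemma SW_hard_utility_0:
  assumes "1 \<le> m"
  shows "SW 0 (hard_profile m) (hard_utility m) = 2 / real m"
proof -
  let ?A = "{..<hard_size m}"
  have "SW 0 (hard_profile m) (hard_utility m) = (\<Sum>i\<in>?A. if agent_type i = 0 then 1 / real m else 0)"
    unfolding SW_def by (intro sum.cong) (auto simp: hard_utility_def)
  also have "\<dots> = (\<Sum>i\<in>{i \<in> ?A. agent_type i = 0}. 1 / real m)"
    by (rule sum.inter_filter[symmetric]) simp
  also have "{i \<in> ?A. agent_type i = 0} = {..1}"
    using assms agent_type_le_iff[of _ 0] power2_less_hard_size[of 0 m] by auto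
  finally show ?thesis
    by simp
qed

lemma SW_hard_utility_top:
  assumes "2 \<le> m"
  shows "2 ^ (m - 2) \<le> SW (m - 1) (hard_profile m) (hard_utility m)"
proof -
  let ?A = "{..<hard_size m}"
  have "(2::real) ^ (m - 2) = card {i \<in> ?A. agent_type i = m - 1}"
    using assms card_agent_type_eq[of "m - 1"] power2_less_hard_size[of "m - 1" m]
    by (simp add: numeral_2_eq_2)
  also have "\<dots> = (\<Sum>i\<in>?A. of_bool (agent_type i = m - 1))"
    by (simp add: sum_of_bool_eq Int_def conj_commute)
  also have "\<dots> \<le> SW (m - 1) (hard_profile m) (hard_utility m)"
    unfolding SW_def length_hard_profile
    by (intro sum_mono) (use assms in \<open>auto simp: hard_utility_def\<close>)
  finally show ?thesis .
qed

lemma utilitarian_distortion_ge_if_hard_winner_zero: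
  assumes "2 \<le> m" "f m (hard_profile m) = 0"
  shows "ereal (real m * 2 ^ m / 8) \<le> utilitarian_distortion f m"
proof -
  let ?SW = "\<lambda>X. SW X (hard_profile m) (hard_utility m)"
  have "(2::real) ^ m = 2 ^ (m - 2) * 2 ^ 2"
    using assms(1) by (metis le_add_diff_inverse2 power_add)
  then have "real m * 2 ^ m / 8 = 2 ^ (m - 2) / (2 / real m)"
    using assms(1) by (simp add: field_simps)
  also have "\<dots> \<le> ?SW (m - 1) / (2 / real m)"
    using assms(1) SW_hard_utility_top by (simp add: divide_right_mono)
  also have "\<dots> = ?SW (m - 1) / ?SW (f m (hard_profile m))"
    using assms SW_hard_utility_0[of m] by simp
  finally have "ereal (real m * 2 ^ m / 8) \<le> ereal (?SW (m - 1) / ?SW (f m (hard_profile m)))"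
    by simp
  also have "\<dots> \<le> utilitarian_distortion f m"
    using assms SW_hard_utility_0[of m]
    by (intro utilitarian_distortion_ge valid_hard_profile utility_consistent_hard_utility) auto
  finally show ?thesis .
qed

theorem mainTheorem4:
  fixes f :: "nat \<Rightarrow> nat list list \<Rightarrow> nat"
  assumes "voting_rule f"
    and "\<forall>c>0. eventually (\<lambda>m. utilitarian_distortion f m \<le> ereal (c * (real m ^ 2 * sqrt (real m)))) sequentially"
  shows "eventually (\<lambda>m. metric_distortion f m > 3) sequentially"
proof -
  have "eventually (\<lambda>m. utilitarian_distortion f m \<le> ereal (real m ^ 2 * sqrt (real m))) sequentially"
    using assms(2)[rule_format, of 1] by simp
  moreover have "eventually (\<lambda>m::nat. real m ^ 2 * sqrt (real m) < real m * 2 ^ m / 8) sequentially"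
    by real_asymp
  ultimately show ?thesis
    using eventually_ge_at_top[of 2]
  proof eventually_elim
    case (elim m)
    then have "f m (hard_profile m) \<noteq> 0"
      using utilitarian_distortion_ge_if_hard_winner_zero[of m f]
      by (meson ereal_less_eq(3) leD order_trans)
    moreover have "f m (hard_profile m) < m"
      using assms(1) valid_hard_profile[of m] elim by (simp add: voting_rule_def)
    ultimately show ?case
      by (rule metric_distortion_gt_3_if_hard_winner_nonzero)
  qed
qed

end
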